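(* For every ballot profile $\mathcal{A}=(A_1,\dots,A_n)$ over a candidate set $C$ with $|C|=m$ and every committee size $k\le m$, a committee $W\subseteq C$ with $|W|=k$ that provides EJR for $(\mathcal{A},k)$ can be computed using $O(nmk)$ arithmetic operations.
   Context: Setting: voters $N=\{1,\dots,n\}$, candidates $C=\{c_1,\dots,c_m\}$, approval ballots $A_i\subseteq C$, $k$ a positive integer with $k\le m$; the profile is given as an $n\times m$ 0/1 table; arithmetic operations on integers are counted at unit cost. EJR: for $\ell\in\{1,\dots,k\}$, $N^*\subseteq N$ is $\ell$-cohesive if $|N^*|\ge\ell n/k$ and $|\bigcap_{i\in N^*}A_i|\ge\ell$. A committee $W$, $|W|=k$, provides EJR for $(\mathcal{A},k)$ if for every $\ell$ and every $\ell$-cohesive $N^*$ some $i\in N^*$ has $|A_i\cap W|\ge\ell$. *)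

theory Defs
  imports Complex_Main
begin

text \<open>Voters are 0,...,n-1, candidates are 0,...,m-1 (candidate c_(j+1) is j).
  A profile is a function A :: nat => nat set with A i the ballot of voter i.\<close>

definition cohesive :: "nat \<Rightarrow> nat \<Rightarrow> (nat \<Rightarrow> nat set) \<Rightarrow> nat \<Rightarrow> nat \<Rightarrow> nat set \<Rightarrow> bool" where
  "cohesive n m A k l S \<longleftrightarrow>
     S \<subseteq> {..<n} \<and>
     real (card S) \<ge> real l * real n / real k \<and>
     card ({..<m} \<inter> (\<Inter>i\<in>S. A i)) \<ge> l"

definition provides_EJR :: "nat \<Rightarrow> nat \<Rightarrow> (nat \<Rightarrow> nat set) \<Rightarrow> nat \<Rightarrow> nat set \<Rightarrow> bool" where
  "provides_EJR n m A k W \<longleftrightarrow>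
     W \<subseteq> {..<m} \<and> card W = k \<and>
     (\<forall>l\<in>{1..k}. \<forall>S. cohesive n m A k l S \<longrightarrow> (\<exists>i\<in>S. card (A i \<inter> W) \<ge> l))"

text \<open>Registers/memory cells indexed by nat, holding unbounded integers.
  Every instruction (in particular every arithmetic operation) costs one step.\<close>

datatype instr =
    Const nat int
  | Add nat nat nat
  | Sub nat nat nat
  | Mul nat nat nat
  | Div nat nat nat
  | Load nat nat
  | Store nat nat
  | Jz nat nat
  | Jneg nat nat
  | Jmp nat
  | Halt

type_synonym config = "nat \<times> (nat \<Rightarrow> int)"

definition halted :: "instr list \<Rightarrow> config \<Rightarrow> bool" where
  "halted P c \<longleftrightarrow> fst c \<ge> length P \<or> P ! fst c = Halt"

fun exec_instr :: "instr \<Rightarrow> config \<Rightarrow> config" where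
  "exec_instr (Const r v) (pc, mem) = (Suc pc, mem(r := v))"
| "exec_instr (Add r a b) (pc, mem) = (Suc pc, mem(r := mem a + mem b))"
| "exec_instr (Sub r a b) (pc, mem) = (Suc pc, mem(r := mem a - mem b))"
| "exec_instr (Mul r a b) (pc, mem) = (Suc pc, mem(r := mem a * mem b))"
| "exec_instr (Div r a b) (pc, mem) = (Suc pc, mem(r := mem a div mem b))"
| "exec_instr (Load r a) (pc, mem) = (Suc pc, mem(r := mem (nat (mem a))))"
| "exec_instr (Store a r) (pc, mem) = (Suc pc, mem(nat (mem a) := mem r))"
| "exec_instr (Jz r l) (pc, mem) = ((if mem r = 0 then l else Suc pc), mem)"
| "exec_instr (Jneg r l) (pc, mem) = ((if mem r < 0 then l else Suc pc), mem)"
| "exec_instr (Jmp l) (pc, mem) = (l, mem)"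
| "exec_instr Halt (pc, mem) = (pc, mem)"

definition step :: "instr list \<Rightarrow> config \<Rightarrow> config" where
  "step P c = (if halted P c then c else exec_instr (P ! fst c) c)"

definition run :: "instr list \<Rightarrow> nat \<Rightarrow> config \<Rightarrow> config" where
  "run P t c = (step P ^^ t) c"

definition init_mem :: "nat \<Rightarrow> nat \<Rightarrow> (nat \<Rightarrow> nat set) \<Rightarrow> nat \<Rightarrow> nat \<Rightarrow> int" where
  "init_mem n m A k addr =
     (if addr = 0 then int n
      else if addr = 1 then int m
      else if addr = 2 then int k
      else if 3 \<le> addr \<and> addr < 3 + n * m then
        (if (addr - 3) mod m \<in> A ((addr - 3) div m) then 1 else 0)
      else 0)"

definition output_committee :: "nat \<Rightarrow> nat \<Rightarrow> (nat \<Rightarrow> int) \<Rightarrow> nat set" where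
  "output_committee n m mem = {j. j < m \<and> mem (3 + n * m + j) \<noteq> 0}"

end

theory Submission
  imports Defs
begin

text \<open>The committee is built greedily, level by level. For \<open>l = k, \<dots>, 1\<close> the candidates are
  scanned once, and candidate \<open>j\<close> is elected if at least \<open>l n / k\<close> of its approvers are
  deficient, i.e. have fewer than \<open>l\<close> elected candidates; in the end the committee is filled up
  arbitrarily to size \<open>k\<close>. Charging every election at level \<open>l\<close> to its deficient approvers, each
  paying \<open>1 / l\<close> of a budget of \<open>k / n\<close>, shows that at most \<open>k\<close> candidates are elected. After
  the pass for level \<open>l\<close> no unelected candidate has \<open>l n / k\<close> deficient approvers, and further
  elections preserve this; but an \<open>l\<close>-cohesive group none of whose members has \<open>l\<close>
  representatives would consist of deficient approvers of a common unelected candidate. Every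
  candidate costs \<open>O(n)\<close> operations per level, hence \<open>O(n m k)\<close> in total; the program below
  realises this on the unit-cost machine.\<close>

section \<open>Greedy committees providing EJR\<close>

definition deficient_approvers :: "nat \<Rightarrow> (nat \<Rightarrow> nat set) \<Rightarrow> (nat \<Rightarrow> nat) \<Rightarrow> nat \<Rightarrow> nat \<Rightarrow> nat" where
  "deficient_approvers n A s l j = card {i. i < n \<and> j \<in> A i \<and> s i < l}"

definition greedy_step :: "nat \<Rightarrow> nat \<Rightarrow> (nat \<Rightarrow> nat set) \<Rightarrow> nat \<Rightarrow> nat set \<Rightarrow> nat \<Rightarrow> nat set" where
  "greedy_step n k A l V j =
     (if j \<notin> V \<and> l * n \<le> k * deficient_approvers n A (\<lambda>i. card (A i \<inter> V)) l j then insert j V else V)"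

fun greedy_pass :: "nat \<Rightarrow> nat \<Rightarrow> (nat \<Rightarrow> nat set) \<Rightarrow> nat \<Rightarrow> nat set \<Rightarrow> nat \<Rightarrow> nat set" where
  "greedy_pass n k A l W 0 = W"
| "greedy_pass n k A l W (Suc j) = greedy_step n k A l (greedy_pass n k A l W j) j"

fun greedy_levels :: "nat \<Rightarrow> nat \<Rightarrow> nat \<Rightarrow> (nat \<Rightarrow> nat set) \<Rightarrow> nat \<Rightarrow> nat set \<Rightarrow> nat set" where
  "greedy_levels n m k A 0 W = W"
| "greedy_levels n m k A (Suc l) W = greedy_levels n m k A l (greedy_pass n k A (Suc l) W m)"

definition fill_step :: "nat \<Rightarrow> nat set \<Rightarrow> nat \<Rightarrow> nat set" where
  "fill_step k V j = (if card V < k \<and> j \<notin> V then insert j V else V)"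

fun fill_up :: "nat \<Rightarrow> nat set \<Rightarrow> nat \<Rightarrow> nat set" where
  "fill_up k W 0 = W"
| "fill_up k W (Suc j) = fill_step k (fill_up k W j) j"

definition ejr_committee :: "nat \<Rightarrow> nat \<Rightarrow> nat \<Rightarrow> (nat \<Rightarrow> nat set) \<Rightarrow> nat set" where
  "ejr_committee n m k A = fill_up k (greedy_levels n m k A k {}) m"

lemma deficient_approvers_Suc:
  "deficient_approvers (Suc i) A s l j = deficient_approvers i A s l j + (if j \<in> A i \<and> s i < l then 1 else 0)"
proof -
  have "{i'. i' < Suc i \<and> j \<in> A i' \<and> s i' < l} =
        (if j \<in> A i \<and> s i < l then insert i else id) {i'. i' < i \<and> j \<in> A i' \<and> s i' < l}"
    by (auto simp: less_Suc_eq)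
  then show ?thesis unfolding deficient_approvers_def by simp
qed

lemma deficient_approvers_antimono:
  assumes "\<And>i. i < n \<Longrightarrow> s i \<le> s' i"
  shows "deficient_approvers n A s' l j \<le> deficient_approvers n A s l j"
  unfolding deficient_approvers_def using assms by (intro card_mono) (auto intro: le_less_trans)

lemma greedy_pass_subset: "W \<subseteq> greedy_pass n k A l W j \<and> greedy_pass n k A l W j \<subseteq> W \<union> {..<j}"
  by (induction j) (auto simp: greedy_step_def)

lemma greedy_levels_subset: "W \<subseteq> greedy_levels n m k A l W \<and> greedy_levels n m k A l W \<subseteq> W \<union> {..<m}"
proof (induction l arbitrary: W)
  case (Suc l)
  show ?case using greedy_pass_subset[of W n k A "Suc l" m] Suc.IH[of "greedy_pass n k A (Suc l) W m"]
    by auto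
qed simp

lemma fill_up_subset: "W \<subseteq> fill_up k W j \<and> fill_up k W j \<subseteq> W \<union> {..<j}"
  by (induction j) (auto simp: fill_step_def)

definition level_stable :: "nat \<Rightarrow> nat \<Rightarrow> (nat \<Rightarrow> nat set) \<Rightarrow> nat \<Rightarrow> nat \<Rightarrow> nat set \<Rightarrow> bool" where
  "level_stable n k A l jj W \<longleftrightarrow>
     (\<forall>j<jj. j \<notin> W \<longrightarrow> k * deficient_approvers n A (\<lambda>i. card (A i \<inter> W)) l j < l * n)"

lemma level_stable_superset:
  assumes "level_stable n k A l jj W" "W \<subseteq> W'" "finite W'"
  shows "level_stable n k A l jj W'"
proof -
  have "deficient_approvers n A (\<lambda>i. card (A i \<inter> W')) l j \<le> deficient_approvers n A (\<lambda>i. card (A i \<inter> W)) l j" for j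
    using assms(2,3) by (intro deficient_approvers_antimono card_mono) auto
  then show ?thesis
    using assms(1,2) unfolding level_stable_def by (meson le_less_trans mult_le_mono2 subsetD)
qed

lemma level_stable_greedy_pass:
  assumes "finite W"
  shows "level_stable n k A l j (greedy_pass n k A l W j)"
proof (induction j)
  case (Suc j)
  define V where "V = greedy_pass n k A l W j"
  have "finite V"
    using greedy_pass_subset[of W n k A l j] assms unfolding V_def by (meson finite_Un finite_lessThan finite_subset)
  show ?case
  proof (cases "j \<notin> V \<and> l * n \<le> k * deficient_approvers n A (\<lambda>i. card (A i \<inter> V)) l j")
    case True
    then have "level_stable n k A l j (insert j V)"
      using Suc \<open>finite V\<close> level_stable_superset unfolding V_def by blast
    then show ?thesis using True unfolding level_stable_def V_def by (auto simp: greedy_step_def less_Suc_eq)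
  next
    case False
    then show ?thesis
      using Suc unfolding level_stable_def V_def by (auto simp: greedy_step_def less_Suc_eq not_le)
  qed
qed (simp add: level_stable_def)

lemma level_stable_greedy_levels:
  assumes "finite W" "0 < l'" "l' \<le> l"
  shows "level_stable n k A l' m (greedy_levels n m k A l W)"
  using assms
proof (induction l arbitrary: W)
  case (Suc l)
  define V where "V = greedy_pass n k A (Suc l) W m"
  have "finite V"
    using greedy_pass_subset[of W n k A "Suc l" m] Suc.prems unfolding V_def
    by (meson finite_Un finite_lessThan finite_subset)
  show ?case
  proof (cases "l' = Suc l")
    case True
    have "level_stable n k A l' m V" using level_stable_greedy_pass Suc.prems True unfolding V_def by blast
    moreover have "V \<subseteq> greedy_levels n m k A l V" "finite (greedy_levels n m k A l V)"
      using greedy_levels_subset[of V n m k A l] \<open>finite V\<close> by (auto intro: finite_subset)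
    ultimately show ?thesis using level_stable_superset by (simp add: V_def)
  next
    case False
    then show ?thesis using Suc.IH[OF \<open>finite V\<close>] Suc.prems by (simp add: V_def)
  qed
qed simp

text \<open>Each voter owns a budget of \<open>k / n\<close> and pays \<open>1 / l\<close> of it for each of its first \<open>l\<close>
  representatives; at level \<open>l\<close> every elected candidate has been paid for in full.\<close>
definition within_budget :: "nat \<Rightarrow> nat \<Rightarrow> (nat \<Rightarrow> nat set) \<Rightarrow> nat \<Rightarrow> nat set \<Rightarrow> bool" where
  "within_budget n k A l W \<longleftrightarrow> card W * (n * l) \<le> k * (\<Sum>i<n. min (card (A i \<inter> W)) l)"

lemma sum_min_card_insert:
  assumes "finite W" "j \<notin> W"
  shows "(\<Sum>i<n. min (card (A i \<inter> W)) l) + deficient_approvers n A (\<lambda>i. card (A i \<inter> W)) l j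
    \<le> (\<Sum>i<n. min (card (A i \<inter> insert j W)) l)"
proof -
  define D where "D = {i. i < n \<and> j \<in> A i \<and> card (A i \<inter> W) < l}"
  have "deficient_approvers n A (\<lambda>i. card (A i \<inter> W)) l j = (\<Sum>i<n. if i \<in> D then 1 else 0)"
    unfolding deficient_approvers_def D_def by (simp add: sum.If_cases Int_def)
  moreover have "min (card (A i \<inter> W)) l + (if i \<in> D then 1 else 0) \<le> min (card (A i \<inter> insert j W)) l" for i
  proof -
    have "card (A i \<inter> W) \<le> card (A i \<inter> insert j W)" using assms(1) by (intro card_mono) auto
    moreover have "i \<in> D \<Longrightarrow> card (A i \<inter> insert j W) = Suc (card (A i \<inter> W))"
      using assms unfolding D_def by (simp add: insert_absorb Int_insert_right)
    ultimately show ?thesis unfolding D_def by auto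
  qed
  ultimately show ?thesis by (simp add: sum.distrib[symmetric] sum_mono)
qed

lemma within_budget_insert:
  assumes "within_budget n k A l W" "finite W" "j \<notin> W"
    and "l * n \<le> k * deficient_approvers n A (\<lambda>i. card (A i \<inter> W)) l j"
  shows "within_budget n k A l (insert j W)"
proof -
  have "card (insert j W) * (n * l) = card W * (n * l) + l * n" using assms(2,3) by simp
  also have "\<dots> \<le> k * (\<Sum>i<n. min (card (A i \<inter> W)) l) + k * deficient_approvers n A (\<lambda>i. card (A i \<inter> W)) l j"
    using assms(1,4) unfolding within_budget_def by linarith
  also have "\<dots> \<le> k * (\<Sum>i<n. min (card (A i \<inter> insert j W)) l)"
    using sum_min_card_insert[OF assms(2,3)] by (simp flip: distrib_left)
  finally show ?thesis unfolding within_budget_def .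
qed

lemma within_budget_greedy_pass:
  assumes "within_budget n k A l W" "finite W"
  shows "within_budget n k A l (greedy_pass n k A l W j) \<and> finite (greedy_pass n k A l W j)"
  by (induction j) (use assms within_budget_insert in \<open>auto simp: greedy_step_def\<close>)

lemma within_budget_Suc:
  assumes "within_budget n k A (Suc l) W"
  shows "within_budget n k A l W"
proof -
  let ?S = "\<lambda>l. \<Sum>i<n. min (card (A i \<inter> W)) l"
  have "min r (Suc l) * l \<le> min r l * Suc l" for r by (cases "r \<le> l") auto
  then have "?S (Suc l) * l \<le> ?S l * Suc l"
    by (simp only: sum_distrib_right) (rule sum_mono)
  have "card W * (n * l) * Suc l = card W * (n * Suc l) * l" by (simp add: algebra_simps)
  also have "\<dots> \<le> k * ?S (Suc l) * l" using assms unfolding within_budget_def by simp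
  also have "\<dots> \<le> k * ?S l * Suc l" using mult_le_mono2[OF \<open>?S (Suc l) * l \<le> ?S l * Suc l\<close>, of k] by (simp only: mult.assoc)
  finally show ?thesis unfolding within_budget_def by (metis mult_le_cancel2 zero_less_Suc)
qed

lemma within_budget_greedy_levels:
  assumes "within_budget n k A l W" "finite W" "0 < l"
  shows "within_budget n k A 1 (greedy_levels n m k A l W) \<and> finite (greedy_levels n m k A l W)"
  using assms
proof (induction l arbitrary: W)
  case (Suc l)
  define V where "V = greedy_pass n k A (Suc l) W m"
  have "within_budget n k A (Suc l) V" "finite V"
    using within_budget_greedy_pass[OF Suc.prems(1,2)] unfolding V_def by auto
  then show ?case
    using Suc.IH[of V] within_budget_Suc[of n k A l V] by (cases "l = 0") (auto simp: V_def)
qed simp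

lemma card_le_if_within_budget_1:
  assumes "within_budget n k A 1 W" "0 < n"
  shows "card W \<le> k"
proof -
  have "card W * n \<le> k * (\<Sum>i<n. min (card (A i \<inter> W)) 1)"
    using assms(1) unfolding within_budget_def by simp
  also have "\<dots> \<le> k * n"
    using sum_mono[of "{..<n}" "\<lambda>i. min (card (A i \<inter> W)) 1" "\<lambda>_. 1"] by simp
  finally show ?thesis using assms(2) by simp
qed

lemma card_fill_up:
  assumes "finite W" "card W \<le> k"
  shows "card (fill_up k W j) = min k (card (W \<union> {..<j}))"
proof (induction j)
  case (Suc j)
  define V where "V = fill_up k W j"
  have fin: "finite (W \<union> {..<j})" using assms by simp
  have V_sub: "V \<subseteq> W \<union> {..<j}" using fill_up_subset[of W k j] unfolding V_def by blast
  have card_Suc: "card (W \<union> {..<Suc j}) = card (W \<union> {..<j}) + (if j \<in> W then 0 else 1)"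
    using fin by (simp add: lessThan_Suc insert_absorb)
  show ?case
  proof (cases "card V < k")
    case True
    then have "V = W \<union> {..<j}"
      using Suc card_subset_eq[OF fin V_sub] unfolding V_def by simp
    then show ?thesis using True Suc card_Suc fin unfolding V_def by (auto simp: fill_step_def)
  next
    case False
    then show ?thesis using Suc card_Suc unfolding V_def by (auto simp: fill_step_def)
  qed
qed (use assms in simp)

lemma fill_up_stable:
  assumes "k \<le> card (fill_up k W j)"
  shows "fill_up k W (j + d) = fill_up k W j"
  by (induction d) (use assms in \<open>auto simp: fill_step_def\<close>)

lemma provides_EJR_if_level_stable:
  assumes "W \<subseteq> {..<m}" "card W = k" "0 < n"
    and stable: "\<And>l. l \<in> {1..k} \<Longrightarrow> level_stable n k A l m W"
  shows "provides_EJR n m A k W"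
  unfolding provides_EJR_def
proof (intro conjI ballI allI impI assms(1,2))
  fix l S
  assume l: "l \<in> {1..k}" and "cohesive n m A k l S"
  then have S: "S \<subseteq> {..<n}" "l * n \<le> k * card S" "l \<le> card ({..<m} \<inter> (\<Inter>i\<in>S. A i))"
    unfolding cohesive_def by (auto simp: field_simps of_nat_mult[symmetric] simp del: of_nat_mult)
  show "\<exists>i\<in>S. l \<le> card (A i \<inter> W)"
  proof (rule ccontr)
    assume "\<not> ?thesis"
    then have unsat: "\<forall>i\<in>S. card (A i \<inter> W) < l" by auto
    obtain i0 where "i0 \<in> S" using S(2) l \<open>0 < n\<close> by (cases "S = {}") auto
    have "\<not> {..<m} \<inter> (\<Inter>i\<in>S. A i) \<subseteq> W"
    proof
      assume "{..<m} \<inter> (\<Inter>i\<in>S. A i) \<subseteq> W"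
      then have "card ({..<m} \<inter> (\<Inter>i\<in>S. A i)) \<le> card (A i0 \<inter> W)"
        using \<open>i0 \<in> S\<close> finite_subset[OF assms(1)] by (intro card_mono) auto
      then show False using S(3) unsat \<open>i0 \<in> S\<close> by fastforce
    qed
    then obtain j where j: "j < m" "j \<notin> W" "\<forall>i\<in>S. j \<in> A i" by blast
    have "card S \<le> deficient_approvers n A (\<lambda>i. card (A i \<inter> W)) l j"
      unfolding deficient_approvers_def using S(1) j unsat by (intro card_mono) auto
    then have "l * n \<le> k * deficient_approvers n A (\<lambda>i. card (A i \<inter> W)) l j"
      using S(2) by (meson le_trans mult_le_mono2)
    then show False using stable[OF l] j unfolding level_stable_def by auto
  qed
qed

theorem ejr_committee_provides_EJR:
  assumes "0 < n" "0 < k" "k \<le> m"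
  shows "provides_EJR n m A k (ejr_committee n m k A)"
proof -
  define V where "V = greedy_levels n m k A k {}"
  have V_sub: "V \<subseteq> {..<m}" using greedy_levels_subset[of "{}" n m k A k] unfolding V_def by simp
  have "within_budget n k A k {}" unfolding within_budget_def by simp
  then have "card V \<le> k"
    using within_budget_greedy_levels card_le_if_within_budget_1 assms unfolding V_def by blast
  moreover have fin: "finite V" using V_sub finite_subset by blast
  ultimately have card: "card (fill_up k V m) = k"
    using card_fill_up assms V_sub by (simp add: Un_absorb1)
  have sub: "V \<subseteq> fill_up k V m" "fill_up k V m \<subseteq> {..<m}" using fill_up_subset[of V k m] V_sub by auto
  have "level_stable n k A l m (fill_up k V m)" if "l \<in> {1..k}" for l
    using level_stable_greedy_levels[of "{}" l k] level_stable_superset[OF _ sub(1)] that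
      finite_subset[OF sub(2)] unfolding V_def by simp
  then show ?thesis
    unfolding ejr_committee_def V_def[symmetric] using provides_EJR_if_level_stable sub card assms by blast
qed

section \<open>Runs of the unit-cost machine\<close>

lemma run_0: "run P 0 c = c"
  by (simp add: run_def)

lemma run_Suc: "run P (Suc t) c = run P t (step P c)"
  by (simp add: run_def funpow_Suc_right del: funpow.simps)

lemma run_numeral: "run P (numeral w) c = run P (pred_numeral w) (step P c)"
  by (simp add: numeral_eq_Suc run_Suc)

lemma run_add: "run P (t1 + t2) c = run P t2 (run P t1 c)"
  unfolding run_def by (subst add.commute) (simp add: funpow_add)

definition reaches :: "instr list \<Rightarrow> config \<Rightarrow> (nat \<Rightarrow> config \<Rightarrow> bool) \<Rightarrow> bool" where
  "reaches P c Q \<longleftrightarrow> (\<exists>t. Q t (run P t c))"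

lemma reachesI: "Q t (run P t c) \<Longrightarrow> reaches P c Q"
  unfolding reaches_def by blast

lemma reaches_here: "Q 0 c \<Longrightarrow> reaches P c Q"
  using reachesI[where t = 0] by (simp add: run_0)

lemma reaches_run: "reaches P (run P t c) (\<lambda>t'. Q (t + t')) \<Longrightarrow> reaches P c Q"
  unfolding reaches_def by (metis run_add)

lemma reaches_mono: "reaches P c Q \<Longrightarrow> (\<And>t c'. Q t c' \<Longrightarrow> Q' t c') \<Longrightarrow> reaches P c Q'"
  unfolding reaches_def by blast

lemma reaches_seq:
  assumes "reaches P c (\<lambda>t c'. t \<le> B \<and> fst c' = pc' \<and> R (snd c'))"
    and "\<And>t mem'. t \<le> B \<Longrightarrow> R mem' \<Longrightarrow> reaches P (pc', mem') (\<lambda>t'. Q (t + t'))"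
  shows "reaches P c Q"
  using assms unfolding reaches_def by (metis prod.collapse run_add)

section \<open>A program for the greedy committee\<close>

text \<open>Each unindented line of the listing starts a segment of the program; the segments begin at
  the addresses 0, 9, 47, 62, 69, 71, 76, 84, 96, 106, 116, 122, 125, 137, 144 and 152.\<close>
definition ejr_program :: "instr list" where
  "ejr_program = [
    Add 1 1 0, Mul 2 2 1, Add 2 2 0, Mul 0 2 1, Add 0 0 0, Add 0 0 0, Add 0 0 0, Add 0 0 0,
      Add 0 0 0,
    Store 0 3, Const 3 1, Add 0 0 3, Store 0 4, Add 0 0 3, Store 0 5, Add 0 0 3, Store 0 6,
      Add 0 0 3, Store 0 7, Add 0 0 3, Store 0 8, Add 0 0 3, Store 0 9, Add 0 0 3, Store 0 10,
      Add 0 0 3, Store 0 11, Add 0 0 3, Store 0 12, Add 0 0 3, Store 0 13, Add 0 0 3,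
      Store 0 14, Add 0 0 3, Store 0 15, Add 0 0 3, Store 0 16, Add 0 0 3, Store 0 17,
      Add 0 0 3, Store 0 18, Add 0 0 3, Store 0 19, Add 0 0 3, Store 0 20, Add 0 0 3,
      Store 0 21,
    Div 4 2 1, Mul 5 4 1, Sub 5 2 5, Sub 6 1 5, Const 20 18, Sub 7 0 20, Mul 20 5 6,
      Add 8 7 20, Const 19 19, Add 8 8 19, Add 9 8 5, Sub 14 20 19, Jneg 14 69, Const 15 22,
      Add 16 7 19,
    Jz 14 69, Load 18 15, Store 16 18, Add 15 15 3, Add 16 16 3, Sub 14 14 3, Jmp 62,
    Const 21 0, Add 10 4 21,
    Jz 10 122, Const 20 0, Add 11 6 20, Add 12 9 20, Add 13 7 20,
    Jz 11 120, Load 18 12, Jz 18 80, Jmp 116, Const 17 0, Add 14 5 17, Add 15 8 17,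
      Add 16 13 17,
    Jz 14 96, Load 18 16, Jz 18 92, Load 19 15, Sub 19 19 10, Jneg 19 91, Jmp 92, Add 17 17 3,
      Sub 14 14 3, Add 15 15 3, Add 16 16 6, Jmp 84,
    Mul 19 17 4, Mul 20 10 5, Sub 19 19 20, Jneg 19 116, Store 12 3, Add 21 21 3, Const 19 0,
      Add 14 5 19, Add 15 8 19, Add 16 13 19,
    Jz 14 116, Load 18 16, Jz 18 112, Load 19 15, Add 19 19 3, Store 15 19, Sub 14 14 3,
      Add 15 15 3, Add 16 16 6, Jmp 106,
    Sub 11 11 3, Add 12 12 3, Add 13 13 3, Jmp 76, Sub 10 10 3, Jmp 71,
    Const 20 0, Add 11 6 20, Add 12 9 20,
    Jz 11 137, Sub 19 21 4, Jneg 19 129, Jmp 137, Load 18 12, Jz 18 132, Jmp 134, Store 12 3,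
      Add 21 21 3, Sub 11 11 3, Add 12 12 3, Jmp 125,
    Mul 0 5 6, Const 1 3, Add 0 0 1, Const 1 0, Add 1 9 1, Const 2 0, Add 2 6 2,
    Jz 2 152, Load 3 1, Store 0 3, Const 3 1, Add 0 0 3, Add 1 1 3, Sub 2 2 3, Jmp 144,
    Halt]"

lemma length_ejr_program: "length ejr_program = 153"
  by (simp add: ejr_program_def)

lemmas ejr_program_nth = arg_cong[where f = "\<lambda>p. p ! i" for i, OF ejr_program_def]

lemma step_ejr_program:
  "pc < 153 \<Longrightarrow> ejr_program ! pc \<noteq> Halt \<Longrightarrow> step ejr_program (pc, mem) = exec_instr (ejr_program ! pc) (pc, mem)"
  by (simp add: step_def halted_def length_ejr_program)

lemmas run_ejr_program = run_0 run_Suc run_numeral step_ejr_program ejr_program_nth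

lemma addr_neq_reg [simp]:
  "22 \<le> x \<Longrightarrow> a < 22 \<Longrightarrow> (x = a) = False"
  "22 \<le> x \<Longrightarrow> a < 22 \<Longrightarrow> (x + y = a) = False"
  "22 \<le> x \<Longrightarrow> a < 22 \<Longrightarrow> (x + y + z = a) = False"
  "22 \<le> x \<Longrightarrow> a < 22 \<Longrightarrow> (a = x) = False"
  "22 \<le> x \<Longrightarrow> a < 22 \<Longrightarrow> (a = x + y) = False"
  for x y z a :: nat
  by auto

lemma output_loop:
  assumes "j + r = m" "1 \<le> N" "3 + N + m \<le> F" "22 \<le> F"
    and "\<forall>j'<m. mem (F + j') = f j'" "\<forall>j'<j. mem (3 + N + j') = f j'"
    and "mem 0 = int (3 + N + j)" "mem 1 = int (F + j)" "mem 2 = int r"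
  shows "reaches ejr_program (144, mem) (\<lambda>t c. t \<le> 8 * r + 1 \<and> fst c = 152 \<and>
    (\<forall>j'<m. snd c (3 + N + j') = f j'))"
  using assms
proof (induction r arbitrary: j mem)
  case 0
  show ?case
    apply (rule reachesI[where t = 1])
    using 0 by (simp add: run_ejr_program)
next
  case (Suc r)
  \<comment> \<open>the simplifier writes register \<open>1\<close> as \<open>Suc 0\<close>\<close>
  have "mem (F + j) = f j" "mem (Suc 0) = int (F + j)" using Suc.prems(1,5,8) by simp_all
  then show ?case
    apply -
    apply (rule reaches_run[where t = 8])
    apply (simp add: run_ejr_program Suc.prems(2,4,7,9) del: of_nat_add of_nat_mult)
    apply (rule reaches_mono[OF Suc.IH[where j = "Suc j"]])
    using Suc.prems by (auto simp: less_Suc_eq)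
qed

definition approval_bit :: "(nat \<Rightarrow> nat set) \<Rightarrow> nat \<Rightarrow> nat \<Rightarrow> int" where
  "approval_bit A m idx = (if idx mod m \<in> A (idx div m) then 1 else 0)"

definition raise_prefix :: "(nat \<Rightarrow> nat set) \<Rightarrow> (nat \<Rightarrow> nat) \<Rightarrow> nat \<Rightarrow> nat \<Rightarrow> nat \<Rightarrow> nat" where
  "raise_prefix A s j i i' = s i' + (if i' < i \<and> j \<in> A i' then 1 else 0)"

lemma raise_prefix_0 [simp]: "raise_prefix A s j 0 = s"
  by (simp add: raise_prefix_def fun_eq_iff)

lemma raise_prefix_card_insert:
  assumes "finite V" "j \<notin> V" "i < n"
  shows "raise_prefix A (\<lambda>i. card (A i \<inter> V)) j n i = card (A i \<inter> insert j V)"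
  using assms by (cases "j \<in> A i") (simp_all add: raise_prefix_def Int_insert_right)

lemma deficient_approvers_0 [simp]: "deficient_approvers 0 A s l j = 0"
  by (simp add: deficient_approvers_def)

text \<open>Memory layout of the program: register 3 holds the constant 1 and registers 4--9 hold
  \<open>k, n, m, X, H, F\<close>; the approval table is copied to \<open>X\<close>, the voters' numbers of representatives
  are kept at \<open>H\<close> and the membership flags of the committee at \<open>F\<close>. Registers 10--21 are
  loop counters, pointers and scratch cells.\<close>
locale ejr_layout =
  fixes n m k :: nat and A :: "nat \<Rightarrow> nat set" and X H F :: nat
  assumes table_above_regs: "22 \<le> X" and sat_above_table: "X + n * m \<le> H" and flags_above_sat: "F = H + n"
begin

lemma arrays_above_regs: "22 \<le> X" "22 \<le> H" "22 \<le> F"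
  using table_above_regs sat_above_table flags_above_sat by auto

lemma sat_below_flags: "H + n \<le> F"
  using flags_above_sat by simp

definition const_regs :: "(nat \<Rightarrow> int) \<Rightarrow> bool" where
  "const_regs mem \<longleftrightarrow> mem 3 = 1 \<and> mem 4 = int k \<and> mem 5 = int n \<and> mem 6 = int m \<and>
     mem 7 = int X \<and> mem 8 = int H \<and> mem 9 = int F"

definition work_arrays :: "(nat \<Rightarrow> nat) \<Rightarrow> nat set \<Rightarrow> (nat \<Rightarrow> int) \<Rightarrow> bool" where
  "work_arrays s W mem \<longleftrightarrow>
     (\<forall>idx<n * m. mem (X + idx) = approval_bit A m idx) \<and>
     (\<forall>i<n. mem (H + i) = int (s i)) \<and>
     (\<forall>j<m. mem (F + j) = (if j \<in> W then 1 else 0))"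

lemma const_regs_upd [simp]:
  "9 < a \<Longrightarrow> const_regs (mem(a := v)) = const_regs mem"
  "const_regs (mem(H + i := v)) = const_regs mem"
  "const_regs (mem(F + i := v)) = const_regs mem"
  unfolding const_regs_def using arrays_above_regs by auto

lemma work_arrays_upd_reg [simp]: "a < 22 \<Longrightarrow> work_arrays s W (mem(a := v)) = work_arrays s W mem"
  unfolding work_arrays_def using arrays_above_regs by auto

lemma work_arrays_insert [simp]:
  "j < m \<Longrightarrow> work_arrays s W mem \<Longrightarrow> work_arrays s (insert j W) (mem(F + j := 1))"
  unfolding work_arrays_def using sat_above_table flags_above_sat by auto

lemma work_arrays_table:
  assumes "work_arrays s W mem" "i < n" "j < m"
  shows "mem (X + j + i * m) = (if j \<in> A i then 1 else 0)"
proof -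
  have "i * m + j < Suc i * m" using assms(3) by simp
  also have "\<dots> \<le> n * m" using assms(2) by (intro mult_le_mono1) simp
  finally have "i * m + j < n * m" .
  then show ?thesis
    using assms(1,3) unfolding work_arrays_def approval_bit_def by (auto simp: algebra_simps)
qed

lemma work_arrays_sat: "work_arrays s W mem \<Longrightarrow> i < n \<Longrightarrow> mem (H + i) = int (s i)"
  unfolding work_arrays_def by blast

lemma work_arrays_flag: "work_arrays s W mem \<Longrightarrow> j < m \<Longrightarrow> mem (F + j) = (if j \<in> W then 1 else 0)"
  unfolding work_arrays_def by blast

lemma count_loop:
  assumes "i + r = n" "const_regs mem" "work_arrays s W mem"
    and "j < m" "mem 10 = int l" "mem 13 = int (X + j)" "mem 14 = int r" "mem 15 = int (H + i)"
    and "mem 16 = int (X + j + i * m)" "mem 17 = int (deficient_approvers i A s l j)"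
  shows "reaches ejr_program (84, mem) (\<lambda>t c. t \<le> 11 * r + 1 \<and> fst c = 96 \<and>
    const_regs (snd c) \<and> work_arrays s W (snd c) \<and> snd c 17 = int (deficient_approvers n A s l j) \<and>
    (\<forall>a\<in>{10, 11, 12, 13, 21}. snd c a = mem a))"
  using assms
proof (induction r arbitrary: i mem)
  case 0
  show ?case
    apply (rule reachesI[where t = 1])
    using 0 by (simp add: run_ejr_program)
next
  case (Suc r)
  note prems = Suc.prems
  have i: "i < n" using prems(1) by simp
  have regs: "mem 3 = 1" "mem 6 = int m" "mem 8 = int H"
    using prems(2) unfolding const_regs_def by simp_all
  have bit: "mem (X + j + i * m) = (if j \<in> A i then 1 else 0)" using work_arrays_table[OF prems(3) i prems(4)] .
  have sat: "mem (H + i) = int (s i)" using work_arrays_sat[OF prems(3) i] .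
  note IH = Suc.IH[where i = "Suc i"]
  consider "j \<notin> A i" | "j \<in> A i" "s i < l" | "j \<in> A i" "\<not> s i < l" by blast
  then show ?case
  proof cases
    case 1
    show ?thesis
      apply (rule reaches_run[where t = 7])
      apply (simp add: run_ejr_program prems(5-10) regs arrays_above_regs bit 1 del: of_nat_add of_nat_mult)
      apply (rule reaches_mono[OF IH])
      \<comment> \<open>\<open>arbitrary: mem\<close> eta-expands the memory, so the update rules for \<open>const_regs\<close> and
        \<open>work_arrays\<close> no longer apply; unfolding them does\<close>
      using prems i arrays_above_regs unfolding const_regs_def work_arrays_def
      by (auto simp: deficient_approvers_Suc 1)
  next
    case 2
    show ?thesis
      apply (rule reaches_run[where t = 11])
      apply (simp add: run_ejr_program prems(5-10) regs arrays_above_regs bit sat 2 del: of_nat_add of_nat_mult)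
      apply (rule reaches_mono[OF IH])
      using prems i arrays_above_regs unfolding const_regs_def work_arrays_def
      by (auto simp: deficient_approvers_Suc 2)
  next
    case 3
    show ?thesis
      apply (rule reaches_run[where t = 11])
      apply (simp add: run_ejr_program prems(5-10) regs arrays_above_regs bit sat 3 del: of_nat_add of_nat_mult)
      apply (rule reaches_mono[OF IH])
      using prems i arrays_above_regs unfolding const_regs_def work_arrays_def
      by (auto simp: deficient_approvers_Suc 3)
  qed
qed

lemma update_loop:
  assumes "i + r = n" "const_regs mem" "work_arrays (raise_prefix A s j i) W mem" "j < m"
    and "mem 13 = int (X + j)" "mem 14 = int r" "mem 15 = int (H + i)" "mem 16 = int (X + j + i * m)"
  shows "reaches ejr_program (106, mem) (\<lambda>t c. t \<le> 10 * r + 1 \<and> fst c = 116 \<and>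
    const_regs (snd c) \<and> work_arrays (raise_prefix A s j n) W (snd c) \<and>
    (\<forall>a\<in>{10, 11, 12, 13, 21}. snd c a = mem a))"
  using assms
proof (induction r arbitrary: i mem)
  case 0
  show ?case
    apply (rule reachesI[where t = 1])
    using 0 by (simp add: run_ejr_program)
next
  case (Suc r)
  note prems = Suc.prems
  have i: "i < n" using prems(1) by simp
  have regs: "mem 3 = 1" "mem 6 = int m" "mem 8 = int H"
    using prems(2) unfolding const_regs_def by simp_all
  have bit: "mem (X + j + i * m) = (if j \<in> A i then 1 else 0)" using work_arrays_table[OF prems(3) i prems(4)] .
  have sat: "mem (H + i) = int (s i)"
    using work_arrays_sat[OF prems(3) i] by (simp add: raise_prefix_def)
  note IH = Suc.IH[where i = "Suc i"]
  show ?case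
  proof (cases "j \<in> A i")
    case False
    show ?thesis
      apply (rule reaches_run[where t = 7])
      apply (simp add: run_ejr_program prems(5-8) regs arrays_above_regs bit False del: of_nat_add of_nat_mult)
      apply (rule reaches_mono[OF IH])
      using prems i arrays_above_regs False unfolding const_regs_def work_arrays_def
      by (auto simp: raise_prefix_def less_Suc_eq)
  next
    case True
    show ?thesis
      apply (rule reaches_run[where t = 10])
      apply (simp add: run_ejr_program prems(5-8) regs arrays_above_regs bit sat True del: of_nat_add of_nat_mult)
      apply (rule reaches_mono[OF IH])
      using prems i arrays_above_regs sat_above_table sat_below_flags True
      unfolding const_regs_def work_arrays_def
      by (auto simp: raise_prefix_def less_Suc_eq)
  qed
qed

lemma candidate_commit:
  assumes "j < m" "j \<notin> V" "finite V" "const_regs mem" "work_arrays (\<lambda>i. card (A i \<inter> V)) V mem"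
    and "mem 10 = int l" "mem 11 = int (Suc r)" "mem 12 = int (F + j)" "mem 13 = int (X + j)"
    and "mem 17 = int (deficient_approvers n A (\<lambda>i. card (A i \<inter> V)) l j)" "mem 21 = int (card V)"
  shows "reaches ejr_program (96, mem) (\<lambda>t c. t \<le> 10 * n + 15 \<and> fst c = 76 \<and> const_regs (snd c) \<and>
    work_arrays (\<lambda>i. card (A i \<inter> greedy_step n k A l V j)) (greedy_step n k A l V j) (snd c) \<and>
    snd c 10 = int l \<and> snd c 11 = int r \<and> snd c 12 = int (F + Suc j) \<and> snd c 13 = int (X + Suc j) \<and>
    snd c 21 = int (card (greedy_step n k A l V j)))"
proof -
  have regs: "mem 3 = 1" "mem 4 = int k" "mem 5 = int n" "mem 6 = int m" "mem 7 = int X" "mem 9 = int F"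
    using assms(4) unfolding const_regs_def by simp_all
  have threshold: "(int d * int k < int l * int n) \<longleftrightarrow> \<not> l * n \<le> k * d" for d
    by (simp add: mult.commute not_le flip: of_nat_mult)
  let ?d = "deficient_approvers n A (\<lambda>i. card (A i \<inter> V)) l j"
  show ?thesis
  proof (cases "l * n \<le> k * ?d")
    case True
    then have step: "greedy_step n k A l V j = insert j V" using assms(2) by (simp add: greedy_step_def)
    show ?thesis
      apply (rule reaches_run[where t = 10])
      apply (simp add: run_ejr_program assms(6-11) regs arrays_above_regs threshold True del: of_nat_add of_nat_mult)
      apply (rule reaches_seq[OF update_loop[where i = 0 and r = n and s = "\<lambda>i. card (A i \<inter> V)" and
            W = "insert j V" and j = j]])
      using assms arrays_above_regs apply (simp_all add: const_regs_def)
      subgoal for t mem'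
        apply (rule reachesI[where t = 4])
        using assms arrays_above_regs raise_prefix_card_insert[OF assms(3,2)]
        by (auto simp: run_ejr_program step const_regs_def work_arrays_def)
      done
  next
    case False
    then have step: "greedy_step n k A l V j = V" by (simp add: greedy_step_def)
    show ?thesis
      apply (rule reachesI[where t = 8])
      using assms arrays_above_regs
      by (simp add: run_ejr_program regs threshold False step del: of_nat_add of_nat_mult)
  qed
qed

lemma candidate_step:
  assumes "j < m" "finite V" "const_regs mem" "work_arrays (\<lambda>i. card (A i \<inter> V)) V mem"
    and "mem 10 = int l" "mem 11 = int (Suc r)" "mem 12 = int (F + j)" "mem 13 = int (X + j)"
    and "mem 21 = int (card V)"
  shows "reaches ejr_program (76, mem) (\<lambda>t c. t \<le> 21 * n + 30 \<and> fst c = 76 \<and> const_regs (snd c) \<and>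
    work_arrays (\<lambda>i. card (A i \<inter> greedy_step n k A l V j)) (greedy_step n k A l V j) (snd c) \<and>
    snd c 10 = int l \<and> snd c 11 = int r \<and> snd c 12 = int (F + Suc j) \<and> snd c 13 = int (X + Suc j) \<and>
    snd c 21 = int (card (greedy_step n k A l V j)))"
proof -
  have regs: "mem 3 = 1" "mem 5 = int n" "mem 7 = int X" "mem 8 = int H"
    using assms(3) unfolding const_regs_def by simp_all
  have flag: "mem (F + j) = (if j \<in> V then 1 else 0)" using work_arrays_flag[OF assms(4,1)] .
  show ?thesis
  proof (cases "j \<in> V")
    case True
    then have step: "greedy_step n k A l V j = V" by (simp add: greedy_step_def)
    show ?thesis
      apply (rule reachesI[where t = 8])
      using assms arrays_above_regs
      by (simp add: run_ejr_program regs flag True step del: of_nat_add of_nat_mult)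
  next
    case False
    show ?thesis
      apply (rule reaches_run[where t = 7])
      apply (simp add: run_ejr_program assms(5-9) regs arrays_above_regs flag False del: of_nat_add of_nat_mult)
      apply (rule reaches_seq[OF count_loop[where i = 0 and r = n and s = "\<lambda>i. card (A i \<inter> V)" and
            W = V and j = j and l = l]])
      using assms arrays_above_regs apply (simp_all add: const_regs_def)
      subgoal for t mem'
        apply (rule reaches_mono[OF candidate_commit[where V = V and j = j and l = l and r = r]])
        using assms False by (auto simp: const_regs_def)
      done
  qed
qed

lemma candidate_loop:
  assumes "j + r = m" "finite W" "const_regs mem"
    and "work_arrays (\<lambda>i. card (A i \<inter> greedy_pass n k A l W j)) (greedy_pass n k A l W j) mem"
    and "mem 10 = int l" "mem 11 = int r" "mem 12 = int (F + j)" "mem 13 = int (X + j)"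
    and "mem 21 = int (card (greedy_pass n k A l W j))"
  shows "reaches ejr_program (76, mem) (\<lambda>t c. t \<le> r * (21 * n + 30) + 1 \<and> fst c = 120 \<and>
    const_regs (snd c) \<and>
    work_arrays (\<lambda>i. card (A i \<inter> greedy_pass n k A l W m)) (greedy_pass n k A l W m) (snd c) \<and>
    snd c 10 = int l \<and> snd c 21 = int (card (greedy_pass n k A l W m)))"
  using assms
proof (induction r arbitrary: j mem)
  case 0
  show ?case
    apply (rule reachesI[where t = 1])
    using 0 by (simp add: run_ejr_program)
next
  case (Suc r)
  have "finite (greedy_pass n k A l W j)"
    using greedy_pass_subset[of W n k A l j] Suc.prems(2) by (meson finite_Un finite_lessThan finite_subset)
  then show ?case
    apply -
    apply (rule reaches_seq[OF candidate_step[where j = j and V = "greedy_pass n k A l W j" and l = l and r = r]])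
    using Suc.prems apply simp_all
    apply (rule reaches_mono[OF Suc.IH[where j = "Suc j"]])
    using Suc.prems by auto
qed

lemma level_loop:
  assumes "finite W" "const_regs mem" "work_arrays (\<lambda>i. card (A i \<inter> W)) W mem"
    and "mem 10 = int l" "mem 21 = int (card W)"
  shows "reaches ejr_program (71, mem) (\<lambda>t c. t \<le> l * (m * (21 * n + 30) + 8) + 1 \<and> fst c = 122 \<and>
    const_regs (snd c) \<and>
    work_arrays (\<lambda>i. card (A i \<inter> greedy_levels n m k A l W)) (greedy_levels n m k A l W) (snd c) \<and>
    snd c 21 = int (card (greedy_levels n m k A l W)))"
  using assms
proof (induction l arbitrary: W mem)
  case 0
  show ?case
    apply (rule reachesI[where t = 1])
    using 0 by (simp add: run_ejr_program)
next
  case (Suc l)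
  have regs: "mem 3 = 1" "mem 6 = int m" "mem 7 = int X" "mem 9 = int F"
    using Suc.prems(2) unfolding const_regs_def by simp_all
  have "finite (greedy_pass n k A (Suc l) W m)"
    using greedy_pass_subset[of W n k A "Suc l" m] Suc.prems(1) by (meson finite_Un finite_lessThan finite_subset)
  then show ?case
    apply -
    apply (rule reaches_run[where t = 5])
    apply (simp add: run_ejr_program Suc.prems(4) regs del: of_nat_add of_nat_mult)
    apply (rule reaches_seq[OF candidate_loop[where j = 0 and r = m and W = W and l = "Suc l"]])
    using Suc.prems apply simp_all
    apply (rule reaches_run[where t = 2])
    apply (simp add: run_ejr_program del: of_nat_add of_nat_mult)
    apply (rule reaches_mono[OF Suc.IH])
    using Suc.prems arrays_above_regs unfolding const_regs_def work_arrays_def by auto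
qed

lemma work_arrays_init:
  assumes "\<forall>i<n * m. mem (X + i) = init_mem n m A k (3 + i)" "\<forall>a. H \<le> a \<longrightarrow> mem a = init_mem n m A k a"
  shows "work_arrays (\<lambda>i. 0) {} mem"
  unfolding work_arrays_def
proof (intro conjI allI impI)
  fix idx assume "idx < n * m"
  then show "mem (X + idx) = approval_bit A m idx"
    using assms(1) unfolding init_mem_def approval_bit_def by auto
next
  fix i assume "i < n"
  then show "mem (H + i) = int 0"
    using assms(2) sat_above_table table_above_regs unfolding init_mem_def by auto
next
  fix j assume "j < m"
  then show "mem (F + j) = (if j \<in> {} then 1 else 0)"
    using assms(2) sat_above_table table_above_regs flags_above_sat unfolding init_mem_def by auto
qed

lemma copy_loop:
  assumes "idx + r = n * m" "19 \<le> idx" "3 + n * m \<le> X" "const_regs mem"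
    and "\<forall>i<idx. mem (X + i) = init_mem n m A k (3 + i)"
    and "\<forall>a. 22 \<le> a \<longrightarrow> (a < X \<or> X + idx \<le> a) \<longrightarrow> mem a = init_mem n m A k a"
    and "mem 14 = int r" "mem 15 = int (3 + idx)" "mem 16 = int (X + idx)"
  shows "reaches ejr_program (62, mem) (\<lambda>t c. t \<le> 7 * r + 1 \<and> fst c = 69 \<and> const_regs (snd c) \<and>
    (\<forall>i<n * m. snd c (X + i) = init_mem n m A k (3 + i)) \<and>
    (\<forall>a. 22 \<le> a \<longrightarrow> (a < X \<or> X + n * m \<le> a) \<longrightarrow> snd c a = init_mem n m A k a))"
  using assms
proof (induction r arbitrary: idx mem)
  case 0
  show ?case
    apply (rule reachesI[where t = 1])
    using 0 by (simp add: run_ejr_program)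
next
  case (Suc r)
  note prems = Suc.prems
  have "mem 3 = 1" using prems(4) unfolding const_regs_def by simp
  moreover have "mem (3 + idx) = init_mem n m A k (3 + idx)" using prems(1-3,6) by auto
  ultimately show ?case
    apply -
    apply (rule reaches_run[where t = 7])
    apply (simp add: run_ejr_program prems(7-9) table_above_regs del: of_nat_add of_nat_mult)
    apply (rule reaches_mono[OF Suc.IH[where idx = "Suc idx"]])
    using prems table_above_regs unfolding const_regs_def by (simp_all add: less_Suc_eq)
qed

lemma fill_loop:
  assumes "j + r = m" "finite W" "const_regs mem" "work_arrays s (fill_up k W j) mem"
    and "mem 11 = int r" "mem 12 = int (F + j)" "mem 21 = int (card (fill_up k W j))"
  shows "reaches ejr_program (125, mem) (\<lambda>t c. t \<le> 10 * r + 4 \<and> fst c = 137 \<and>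
    const_regs (snd c) \<and> work_arrays s (fill_up k W m) (snd c))"
  using assms
proof (induction r arbitrary: j mem)
  case 0
  show ?case
    apply (rule reachesI[where t = 1])
    using 0 by (simp add: run_ejr_program)
next
  case (Suc r)
  note prems = Suc.prems
  define V where "V = fill_up k W j"
  have j: "j < m" using prems(1) by simp
  have "finite V"
    using fill_up_subset[of W k j] prems(2) unfolding V_def by (meson finite_Un finite_lessThan finite_subset)
  have regs: "mem 3 = 1" "mem 4 = int k"
    using prems(3) unfolding const_regs_def by simp_all
  have arrays: "work_arrays s V mem" and size: "mem 21 = int (card V)"
    using prems(4,7) unfolding V_def by simp_all
  have flag: "mem (F + j) = (if j \<in> V then 1 else 0)" using work_arrays_flag[OF arrays j] .
  note IH = Suc.IH[where j = "Suc j"]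
  consider "k \<le> card V" | "card V < k" "j \<in> V" | "card V < k" "j \<notin> V" by linarith
  then show ?case
  proof cases
    case 1
    then have "fill_up k W m = V"
      using fill_up_stable[of k W j "Suc r"] prems(1) unfolding V_def by (simp del: fill_up.simps)
    then show ?thesis
      apply -
      apply (rule reachesI[where t = 4])
      using prems arrays_above_regs arrays 1 unfolding const_regs_def work_arrays_def
      by (simp add: run_ejr_program regs flag size del: of_nat_add of_nat_mult)
  next
    case 2
    then have "fill_up k W (Suc j) = V" by (simp add: V_def fill_step_def)
    then show ?thesis
      apply -
      apply (rule reaches_run[where t = 9])
      apply (simp add: run_ejr_program prems(5,6) regs flag size arrays_above_regs 2 del: of_nat_add of_nat_mult)
      apply (rule reaches_mono[OF IH])
      using prems arrays arrays_above_regs unfolding const_regs_def work_arrays_def V_def by auto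
  next
    case 3
    then have "fill_up k W (Suc j) = insert j V" by (simp add: V_def fill_step_def)
    moreover have "card (insert j V) = card V + 1" using \<open>finite V\<close> 3 by simp
    ultimately show ?thesis
      apply -
      apply (rule reaches_run[where t = 10])
      apply (simp add: run_ejr_program prems(5,6) regs flag size arrays_above_regs 3 del: of_nat_add of_nat_mult)
      apply (rule reaches_mono[OF IH])
      using prems arrays arrays_above_regs j sat_below_flags sat_above_table
      unfolding const_regs_def work_arrays_def V_def by auto
  qed
qed

lemma fill_and_output:
  assumes "finite W" "const_regs mem" "work_arrays s W mem" "mem 21 = int (card W)"
    and "1 \<le> n * m" "3 + n * m + m \<le> X"
  shows "reaches ejr_program (122, mem) (\<lambda>t c. t \<le> 18 * m + 20 \<and> fst c = 152 \<and>
    (\<forall>j<m. snd c (3 + n * m + j) = (if j \<in> fill_up k W m then 1 else 0)))"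
proof -
  have regs: "mem 3 = 1" "mem 6 = int m" "mem 9 = int F"
    using assms(2) unfolding const_regs_def by simp_all
  have "X \<le> F" using sat_above_table flags_above_sat by simp
  show ?thesis
    apply (rule reaches_run[where t = 3])
    apply (simp add: run_ejr_program regs del: of_nat_add of_nat_mult)
    apply (rule reaches_seq[OF fill_loop[where j = 0 and r = m and W = W and s = s]])
    using assms apply simp_all
    apply (rule reaches_run[where t = 7])
    apply (simp add: run_ejr_program del: of_nat_add of_nat_mult)
    apply (rule reaches_mono[OF output_loop[where j = 0 and r = m and N = "n * m" and F = F and
          f = "\<lambda>j. if j \<in> fill_up k W m then 1 else 0"]])
    using assms \<open>X \<le> F\<close> arrays_above_regs unfolding const_regs_def work_arrays_def
    by (auto simp: algebra_simps)
qed

end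


text \<open>The input table overlaps the registers, so the program first saves cells 3--21. Meanwhile
  \<open>n, m, k\<close> are kept in the two cells \<open>n + m\<close> and \<open>k (n + m) + n\<close>, from which they are
  recovered by one division, and the working area starts at the following base address, which
  lies above input and output.\<close>
definition table_base :: "nat \<Rightarrow> nat \<Rightarrow> nat \<Rightarrow> nat" where
  "table_base n m k = 32 * ((k * (n + m) + n) * (n + m))"

lemma init_mem_params [simp]:
  "init_mem n m A k 0 = int n" "init_mem n m A k (Suc 0) = int m" "init_mem n m A k 2 = int k"
  unfolding init_mem_def by auto

lemma nat_int_plus [simp]:
  "nat (int x + 1) = x + 1" "nat (1 + int x) = x + 1"
  "nat (int x + numeral c) = x + numeral c" "nat (numeral c + int x) = x + numeral c"
  by (simp_all add: nat_add_distrib)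

lemma encode_params:
  "reaches ejr_program (0, init_mem n m A k) (\<lambda>t c. t \<le> 9 \<and> fst c = 9 \<and>
     snd c 0 = int (table_base n m k) \<and> snd c 1 = int (n + m) \<and> snd c 2 = int (k * (n + m) + n) \<and>
     (\<forall>a. 3 \<le> a \<longrightarrow> snd c a = init_mem n m A k a))"
  apply (rule reachesI[where t = 9])
  apply (simp add: run_ejr_program numeral_2_eq_2[symmetric])
  apply (simp add: table_base_def algebra_simps)
  done

lemma all_less_numeral: "(\<forall>i < numeral w. P i) \<longleftrightarrow> P (pred_numeral w) \<and> (\<forall>i < pred_numeral w. P i)"
  by (simp add: numeral_eq_Suc All_less_Suc)

lemma save_low_table:
  assumes "mem 0 = int X" "mem 1 = int (n + m)" "mem 2 = int (k * (n + m) + n)" "22 \<le> X"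
    and "\<forall>a. 3 \<le> a \<longrightarrow> mem a = init_mem n m A k a"
  shows "reaches ejr_program (9, mem) (\<lambda>t c. t \<le> 38 \<and> fst c = 47 \<and>
     snd c 0 = int (X + 18) \<and> snd c 1 = int (n + m) \<and> snd c 2 = int (k * (n + m) + n) \<and> snd c 3 = 1 \<and>
     (\<forall>i<19. snd c (X + i) = init_mem n m A k (3 + i)) \<and>
     (\<forall>a. 22 \<le> a \<longrightarrow> (a < X \<or> X + 19 \<le> a) \<longrightarrow> snd c a = init_mem n m A k a))"
  apply (rule reaches_run[where t = 38])
  apply (simp add: run_ejr_program assms(1-4))
  apply (rule reaches_here)
  using assms by (auto simp: all_less_numeral)


lemma table_base_bound:
  assumes "0 < n" "0 < m" "0 < k"
  shows "n * m + m + 22 \<le> table_base n m k"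
proof -
  let ?s = "n + m"
  have "?s * ?s \<le> (k * ?s + n) * ?s" using assms(3) by (intro mult_le_mono1) (simp add: trans_le_add1)
  moreover have "n * m + m \<le> ?s * ?s"
  proof -
    have "?s * ?s = n * n + 2 * (n * m) + m * m" by (simp add: algebra_simps)
    moreover have "m \<le> m * m" using assms(2) by simp
    ultimately show ?thesis by linarith
  qed
  moreover have "2 * 2 \<le> ?s * ?s" using assms(1,2) by (intro mult_le_mono) simp_all
  ultimately show ?thesis unfolding table_base_def by linarith
qed

section \<open>Correctness and running time\<close>

lemma step_count_bound:
  fixes n m k :: nat
  assumes "0 < n" "0 < m" "0 < k"
  shows "9 + 38 + (7 * (n * m) + 30) + (k * (m * (21 * n + 30) + 8) + 1) + (18 * m + 20) \<le> 200 * n * m * k"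
proof -
  have "1 \<le> n * m" "m \<le> n * m" "n * m \<le> n * m * k" "m * k \<le> n * m * k" "k \<le> n * m * k"
    using assms by (simp_all add: Suc_le_eq)
  moreover have "k * (m * (21 * n + 30) + 8) = 21 * (n * m * k) + 30 * (m * k) + 8 * k"
    by (simp add: algebra_simps)
  ultimately show ?thesis by linarith
qed

context ejr_layout
begin

lemma restore_params:
  assumes "0 < m" "n * m + m + 22 \<le> X" "H = X + n * m + 19"
    and "mem 0 = int (X + 18)" "mem 1 = int (n + m)" "mem 2 = int (k * (n + m) + n)" "mem 3 = 1"
    and "\<forall>i<19. mem (X + i) = init_mem n m A k (3 + i)"
    and "\<forall>a. 22 \<le> a \<longrightarrow> (a < X \<or> X + 19 \<le> a) \<longrightarrow> mem a = init_mem n m A k a"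
  shows "reaches ejr_program (47, mem) (\<lambda>t c. t \<le> 7 * (n * m) + 30 \<and> fst c = 71 \<and>
    const_regs (snd c) \<and> work_arrays (\<lambda>i. 0) {} (snd c) \<and> snd c 10 = int k \<and> snd c 21 = 0)"
proof -
  have "(n + k * (n + m)) div (n + m) = k" using assms(1) by (simp add: div_mult_self2)
  then have params:
      "int (k * (n + m) + n) div int (n + m) = int k"
      "int (k * (n + m) + n) - int k * int (n + m) = int n" "int (n + m) - int n = int m"
      "int (X + 18) - 18 = int X"
    by (simp only: zdiv_int[symmetric] add.commute) simp_all
  have small: "(int n * int m - 19 < 0) \<longleftrightarrow> n * m < 19" "(int n * int m < 19) \<longleftrightarrow> n * m < 19"
    by (simp_all flip: of_nat_mult)
  have "22 \<le> X" using assms(2) by simp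
  have reg1: "mem (Suc 0) = int (n + m)" using assms(5) by simp
  show ?thesis
  proof (cases "n * m < 19")
    case True
    show ?thesis
      apply (rule reachesI[where t = 15])
      apply (simp add: run_ejr_program assms(4-7) reg1 params small True \<open>22 \<le> X\<close> del: of_nat_add of_nat_mult)
      using assms True small work_arrays_init flags_above_sat unfolding const_regs_def by simp
  next
    case False
    show ?thesis
      apply (rule reaches_run[where t = 15])
      apply (simp add: run_ejr_program assms(4-7) reg1 params small False \<open>22 \<le> X\<close> del: of_nat_add of_nat_mult)
      apply (rule reaches_seq[OF copy_loop[where idx = 19 and r = "n * m - 19"]])
      using assms False flags_above_sat unfolding const_regs_def apply simp_all
      apply (rule reachesI[where t = 2])
      using work_arrays_init assms(3) by (simp add: run_ejr_program)
  qed
qed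

lemma setup_phase:
  assumes "0 < n" "0 < m" "0 < k" "X = table_base n m k" "H = X + n * m + 19"
  shows "reaches ejr_program (0, init_mem n m A k) (\<lambda>t c. t \<le> 7 * (n * m) + 77 \<and> fst c = 71 \<and>
    const_regs (snd c) \<and> work_arrays (\<lambda>i. 0) {} (snd c) \<and> snd c 10 = int k \<and> snd c 21 = 0)"
proof -
  have X: "n * m + m + 22 \<le> X" using table_base_bound assms(1-4) by blast
  show ?thesis
    apply (rule reaches_seq[OF encode_params])
    subgoal premises prems for t mem
      apply (rule reaches_seq[OF save_low_table[where X = X and A = A and n = n and m = m and k = k]])
      using prems X assms(4) apply simp_all
      apply (rule reaches_mono[OF restore_params])
      using assms(2,5) X by simp_all
    done
qed

end

theorem ejr_program_correct:
  assumes "0 < n" "0 < k" "k \<le> m"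
  shows "reaches ejr_program (0, init_mem n m A k) (\<lambda>t c. t \<le> 200 * n * m * k \<and>
    halted ejr_program c \<and> output_committee n m (snd c) = ejr_committee n m k A)"
proof -
  have "0 < m" using assms(2,3) by simp
  define X where "X = table_base n m k"
  define H where "H = X + n * m + 19"
  define F where "F = X + n * m + 19 + n"
  have X: "n * m + m + 22 \<le> X" using table_base_bound assms(1,2) \<open>0 < m\<close> unfolding X_def by blast
  interpret ejr_layout n m k A X H F
    using X unfolding H_def F_def by unfold_locales auto
  define V where "V = greedy_levels n m k A k {}"
  have V: "V \<subseteq> {..<m}" using greedy_levels_subset[of "{}" n m k A k] unfolding V_def by simp
  then have "fill_up k V m \<subseteq> {..<m}" using fill_up_subset[of V k m] by auto
  then have committee_out: "output_committee n m mem = ejr_committee n m k A"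
    if "\<forall>j<m. mem (3 + n * m + j) = (if j \<in> fill_up k V m then 1 else 0)" for mem
    using that unfolding output_committee_def ejr_committee_def V_def[symmetric] by (auto split: if_splits)
  have "1 \<le> n * m" using assms(1) \<open>0 < m\<close> by (simp add: Suc_le_eq)
  show ?thesis
    apply (rule reaches_seq[OF setup_phase[OF assms(1) \<open>0 < m\<close> assms(2) X_def H_def]])
    apply (rule reaches_seq[OF level_loop[where W = "{}" and l = k]])
    apply simp_all
    apply (rule reaches_mono[OF fill_and_output[where W = V]])
    using V finite_subset \<open>1 \<le> n * m\<close> X apply (simp_all add: V_def[symmetric])
    using step_count_bound[OF assms(1) \<open>0 < m\<close> assms(2)] committee_out
    by (auto simp: halted_def ejr_program_nth)
qed

theorem mainTheorem12:
  shows "\<exists>(P :: instr list) (c :: nat).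
     \<forall>n m k (A :: nat \<Rightarrow> nat set).
       1 \<le> n \<longrightarrow> 1 \<le> k \<longrightarrow> k \<le> m \<longrightarrow> (\<forall>i<n. A i \<subseteq> {..<m}) \<longrightarrow>
       (\<exists>t. t \<le> c * n * m * k \<and>
            halted P (run P t (0, init_mem n m A k)) \<and>
            provides_EJR n m A k (output_committee n m (snd (run P t (0, init_mem n m A k)))))"
proof (rule exI[of _ ejr_program], rule exI[of _ 200], intro allI impI)
  fix n m k :: nat and A :: "nat \<Rightarrow> nat set"
  \<comment> \<open>ballots may contain other candidates: the program only reads approvals of candidates below \<open>m\<close>\<close>
  assume "1 \<le> n" "1 \<le> k" "k \<le> m" "\<forall>i<n. A i \<subseteq> {..<m}"
  then obtain t where "t \<le> 200 * n * m * k" "halted ejr_program (run ejr_program t (0, init_mem n m A k))"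
    and "output_committee n m (snd (run ejr_program t (0, init_mem n m A k))) = ejr_committee n m k A"
    using ejr_program_correct[of n k m A] unfolding reaches_def by auto
  then show "\<exists>t. t \<le> 200 * n * m * k \<and>
      halted ejr_program (run ejr_program t (0, init_mem n m A k)) \<and>
      provides_EJR n m A k (output_committee n m (snd (run ejr_program t (0, init_mem n m A k))))"
    using ejr_committee_provides_EJR[of n k m A] \<open>1 \<le> n\<close> \<open>1 \<le> k\<close> \<open>k \<le> m\<close> by auto
qed

end
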